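(* Let $N\in\mathbb{N}$, $N\geqslant 2$, let $v:[0,1]\to\mathbb{R}$ be continuous and let $f:[0,1]\times\mathbb{R}\to\mathbb{R}$ satisfy: (C(c)) $f$ is continuous on $[0,1]\times\mathbb{R}$ and has a continuous partial derivative $f_x$ with respect to the second variable on $[0,1]\times\mathbb{R}$; (D(f)) there exist positive constants $A,B$ with $A<1$ such that $|f(t,x)|\leqslant A|x|+B$ for all $t\in[0,1]$, $x\in\mathbb{R}$; (D($f_x$)) $\inf_{(t,x)\in[0,1]\times\mathbb{R}} f_x(t,x)>-1$. Then the discrete problem $$\Delta^2x(k-1)=\tfrac{1}{N^2}f\left(\tfrac{k}{N},x(k)\right)+\tfrac{1}{N^2}v\left(\tfrac{k}{N}\right),\ k\in\{1,\dots,N-1\},\qquad x(0)=x(N)=0,$$ has a unique solution $x:\{0,1,\dots,N\}\to\mathbb{R}$.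
   Context: $\Delta x(k-1)=x(k)-x(k-1)$, so $\Delta^2x(k-1)=x(k+1)-2x(k)+x(k-1)$. *)

theory Defs
  imports "HOL-Analysis.Analysis"
begin

text \<open>Second difference: Delta^2 x(k-1) = x(k+1) - 2 x(k) + x(k-1).\<close>
definition second_diff :: "(nat \<Rightarrow> real) \<Rightarrow> nat \<Rightarrow> real" where
  "second_diff x k = x (k + 1) - 2 * x k + x (k - 1)"

text \<open>x (a function on {0..N}, represented as nat => real, only values on {0..N} matter)
  solves the discrete Dirichlet problem.\<close>
definition discrete_solution ::
  "nat \<Rightarrow> (real \<Rightarrow> real \<Rightarrow> real) \<Rightarrow> (real \<Rightarrow> real) \<Rightarrow> (nat \<Rightarrow> real) \<Rightarrow> bool" where
  "discrete_solution N f v x \<longleftrightarrow>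
     (\<forall>k\<in>{1..N-1}. second_diff x k =
        (1 / (real N)^2) * f (real k / real N) (x k) + (1 / (real N)^2) * v (real k / real N))
     \<and> x 0 = 0 \<and> x N = 0"

end

theory Submission
  imports Defs
begin

(* Existence is proved by shooting: solving the recursion forward from x(0) = 0 with slope
   x(1) = s gives a trajectory whose endpoint x(N) depends continuously on s. Since A < 1, the
   trajectory stays within (A max|x| + B)/2 of the line k s, so x(N) has the sign of s once |s| is
   large, and the intermediate value theorem yields a shot with x(N) = 0.
   Uniqueness is an energy estimate. For the difference d of two solutions, summation by parts
   gives sum d(k) Delta^2 d(k-1) = -E with E = sum (Delta d)^2, the lower bound m > -1 on f_x
   bounds the left side below by m/N^2 sum d(k)^2, and the discrete Poincare inequality
   sum d(k)^2 <= N^2 E then forces (1 + m) E <= 0, i.e. d = 0. *)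

lemma diff_mult_diff_ge_of_deriv_ge:
  fixes g g' :: "real \<Rightarrow> real"
  assumes deriv: "\<And>x. (g has_real_derivative g' x) (at x)"
    and lower: "\<And>x. m \<le> g' x"
  shows "m * (b - a)^2 \<le> (g b - g a) * (b - a)"
proof -
  have slope: "m * (q - p) \<le> g q - g p" if "p \<le> q" for p q
  proof -
    have "((\<lambda>x. g x - m * x) has_real_derivative g' y - m) (at y)" for y
      using deriv[of y] DERIV_cmult_Id[of m y] by (rule DERIV_diff)
    then have "g p - m * p \<le> g q - m * q"
      using DERIV_nonneg_imp_nondecreasing[OF that, of "\<lambda>x. g x - m * x"] lower
      by (metis diff_ge_0_iff_ge)
    then show ?thesis by (simp add: algebra_simps)
  qed
  show ?thesis
  proof (cases "a \<le> b")
    case True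
    then show ?thesis
      using mult_right_mono[OF slope[OF True], of "b - a"] by (simp add: power2_eq_square)
  next
    case False
    then have "m * (a - b) * (a - b) \<le> (g a - g b) * (a - b)"
      by (intro mult_right_mono slope) auto
    then show ?thesis by (simp add: power2_eq_square algebra_simps)
  qed
qed

lemma second_diff_diff:
  "second_diff (\<lambda>k. y k - x k) k = second_diff y k - second_diff x k"
  by (simp add: second_diff_def)

lemma sum_mult_second_diff:
  "(\<Sum>k=1..n. d k * second_diff d k)
     = d n * (d (Suc n) - d n) - d 0 * (d 1 - d 0) - (\<Sum>k<n. (d (Suc k) - d k)^2)"
  by (induction n) (simp_all add: second_diff_def power2_eq_square algebra_simps)

lemma sum_mult_second_diff_dirichlet:
  assumes "d 0 = 0" "d N = 0"
  shows "(\<Sum>k=1..N-1. d k * second_diff d k) = - (\<Sum>k<N. (d (Suc k) - d k)^2)"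
proof (cases N)
  case (Suc n)
  then show ?thesis
    using assms sum_mult_second_diff[of d n] by (simp add: power2_eq_square)
qed simp

lemma sum_squares_le_dirichlet_energy:
  fixes d :: "nat \<Rightarrow> real"
  assumes "d 0 = 0"
  shows "(\<Sum>k=1..N-1. (d k)^2) \<le> (real N)^2 * (\<Sum>k<N. (d (Suc k) - d k)^2)"
    (is "_ \<le> _ * ?E")
proof -
  have bound: "(d k)^2 \<le> real N * ?E" if "k \<le> N" for k
  proof -
    have "(d k)^2 = (\<Sum>j<k. d (Suc j) - d j)^2"
      using assms by (simp add: sum_lessThan_telescope)
    also have "\<dots> \<le> (\<Sum>j<k. (d (Suc j) - d j)^2) * real k"
      using sum_squared_le_sum_of_squares[of _ "{..<k}"] by simp
    also have "\<dots> \<le> ?E * real N"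
      using that by (intro mult_mono sum_mono2) (auto simp: sum_nonneg)
    finally show ?thesis by (simp add: mult.commute)
  qed
  have "(\<Sum>k=1..N-1. (d k)^2) \<le> real (card {1..N-1}) * (real N * ?E)"
    by (rule sum_bounded_above) (use bound in auto)
  also have "\<dots> \<le> real N * (real N * ?E)"
    by (intro mult_right_mono) (auto simp: sum_nonneg)
  finally show ?thesis
    by (simp add: power2_eq_square)
qed

lemma dirichlet_eq_zero_of_second_diff_ge:
  fixes d :: "nat \<Rightarrow> real"
  assumes "d 0 = 0" "d N = 0" "-1 < m"
    and lower: "\<And>k. 1 \<le> k \<Longrightarrow> k < N \<Longrightarrow> m / (real N)^2 * (d k)^2 \<le> d k * second_diff d k"
    and "k \<le> N"
  shows "d k = 0"
proof -
  \<comment> \<open>With \<open>c \<le> 0\<close> the Poincare inequality can be multiplied by \<open>c / N\<^sup>2\<close>.\<close>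
  define c where "c = min m 0"
  define E where "E = (\<Sum>k<N. (d (Suc k) - d k)^2)"
  have "c / (real N)^2 * (d k)^2 \<le> d k * second_diff d k" if "1 \<le> k" "k < N" for k
    using mult_right_mono[of c m "(d k)^2 / (real N)^2"] lower[OF that] by (simp add: c_def)
  then have "c / (real N)^2 * (\<Sum>k=1..N-1. (d k)^2) \<le> (\<Sum>k=1..N-1. d k * second_diff d k)"
    by (auto simp: sum_distrib_left intro!: sum_mono)
  moreover have "c * E \<le> c / (real N)^2 * (\<Sum>k=1..N-1. (d k)^2)" if "N \<noteq> 0"
    using mult_left_mono_neg[OF sum_squares_le_dirichlet_energy[of d N, OF \<open>d 0 = 0\<close>], of "c / (real N)^2"]
      that by (simp add: E_def c_def divide_nonpos_pos)
  ultimately have "(1 + c) * E \<le> 0" if "N \<noteq> 0"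
    using that sum_mult_second_diff_dirichlet[of d N] assms(1,2) by (simp add: E_def algebra_simps)
  then have "E = 0"
    using \<open>-1 < m\<close> by (cases "N = 0") (auto simp: E_def c_def mult_le_0_iff sum_nonneg antisym)
  then have "\<forall>j<N. d (Suc j) = d j"
    by (simp add: E_def sum_nonneg_eq_0_iff)
  then show ?thesis
    using \<open>k \<le> N\<close> \<open>d 0 = 0\<close> by (induction k) auto
qed

lemma increment_eq_sum_second_diff:
  "x (Suc j) - x j = x 1 - x 0 + (\<Sum>i=1..j. second_diff x i)"
  by (induction j) (simp_all add: second_diff_def)

lemma near_linear_of_second_diff_bounded:
  assumes "x 0 = 0" and bounded: "\<And>j. 1 \<le> j \<Longrightarrow> j < k \<Longrightarrow> \<bar>second_diff x j\<bar> \<le> H"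
  shows "2 * \<bar>x k - real k * x 1\<bar> \<le> real k * (real k - 1) * H"
proof -
  have increment: "\<bar>x (Suc j) - x j - x 1\<bar> \<le> real j * H" if "j < k" for j
  proof -
    have "\<bar>\<Sum>i=1..j. second_diff x i\<bar> \<le> (\<Sum>i=1..j. \<bar>second_diff x i\<bar>)"
      by (rule sum_abs)
    also have "\<dots> \<le> real (card {1..j}) * H"
      by (rule sum_bounded_above) (use that bounded in auto)
    finally show ?thesis
      using increment_eq_sum_second_diff[of x j] \<open>x 0 = 0\<close> by simp
  qed
  have "x k - real k * x 1 = (\<Sum>j<k. x (Suc j) - x j - x 1)"
    using \<open>x 0 = 0\<close> by (induction k) (simp_all add: algebra_simps)
  also have "\<bar>\<dots>\<bar> \<le> (\<Sum>j<k. \<bar>x (Suc j) - x j - x 1\<bar>)"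
    by (rule sum_abs)
  also have "\<dots> \<le> (\<Sum>j<k. real j * H)"
    by (rule sum_mono) (use increment in auto)
  finally have "2 * \<bar>x k - real k * x 1\<bar> \<le> (2 * (\<Sum>j<k. real j)) * H"
    by (simp add: sum_distrib_right)
  also have "2 * (\<Sum>j<k. real j) = real k * (real k - 1)"
    by (induction k) (simp_all add: algebra_simps)
  finally show ?thesis .
qed

fun shoot :: "(nat \<Rightarrow> real \<Rightarrow> real) \<Rightarrow> real \<Rightarrow> nat \<Rightarrow> real" where
  "shoot h s 0 = 0"
| "shoot h s (Suc 0) = s"
| "shoot h s (Suc (Suc k)) = 2 * shoot h s (Suc k) - shoot h s k + h (Suc k) (shoot h s (Suc k))"

lemma shoot_1 [simp]: "shoot h s 1 = s"
  using shoot.simps(2) by simp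

lemma second_diff_shoot: "1 \<le> k \<Longrightarrow> second_diff (shoot h s) k = h k (shoot h s k)"
  by (cases k) (simp_all add: second_diff_def)

lemma continuous_on_shoot:
  assumes "\<And>j. 1 \<le> j \<Longrightarrow> j < k \<Longrightarrow> continuous_on UNIV (h j)"
  shows "continuous_on UNIV (\<lambda>s. shoot h s k)"
  using assms
proof (induction k rule: less_induct)
  case (less k)
  have shoot_cont: "continuous_on UNIV (\<lambda>s. shoot h s m)" if "m < k" for m
    using that less.prems by (intro less.IH) auto
  consider "k = 0" | "k = Suc 0" | n where "k = Suc (Suc n)"
    by (metis not0_implies_Suc)
  then show ?case
  proof cases
    case 3
    have "continuous_on UNIV (\<lambda>s. h (Suc n) (shoot h s (Suc n)))"
      using continuous_on_compose2[OF less.prems shoot_cont] 3 by simp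
    then show ?thesis
      using 3 shoot_cont[of n] shoot_cont[of "Suc n"] by (simp add: continuous_on_add continuous_on_diff continuous_on_mult_left)
  qed simp_all
qed

lemma shoot_deviation_le:
  fixes h :: "nat \<Rightarrow> real \<Rightarrow> real"
  assumes "0 \<le> A" "0 \<le> A * M + B"
    and growth: "\<And>k y. 1 \<le> k \<Longrightarrow> k < N \<Longrightarrow> \<bar>h k y\<bar> \<le> (A * \<bar>y\<bar> + B) / (real N)^2"
    and bounded: "\<And>j. j < N \<Longrightarrow> \<bar>shoot h s j\<bar> \<le> M"
    and "k \<le> N"
  shows "2 * \<bar>shoot h s k - real k * s\<bar> \<le> A * M + B"
proof (cases "k = 0")
  case False
  have "\<bar>second_diff (shoot h s) j\<bar> \<le> (A * M + B) / (real N)^2" if "1 \<le> j" "j < N" for j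
  proof -
    have "\<bar>second_diff (shoot h s) j\<bar> \<le> (A * \<bar>shoot h s j\<bar> + B) / (real N)^2"
      using that growth by (simp add: second_diff_shoot)
    also have "\<dots> \<le> (A * M + B) / (real N)^2"
      using that bounded[of j] \<open>0 \<le> A\<close> by (intro divide_right_mono add_right_mono mult_left_mono) auto
    finally show ?thesis .
  qed
  then have "2 * \<bar>shoot h s k - real k * shoot h s 1\<bar> \<le> real k * (real k - 1) * ((A * M + B) / (real N)^2)"
    using \<open>k \<le> N\<close> by (intro near_linear_of_second_diff_bounded) auto
  also have "\<dots> \<le> (real N)^2 * ((A * M + B) / (real N)^2)"
  proof (rule mult_right_mono)
    have "real k * (real k - 1) \<le> real k * real k"
      by (simp add: mult_left_mono)
    also have "\<dots> \<le> (real N)^2"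
      using \<open>k \<le> N\<close> by (simp add: power2_eq_square mult_mono)
    finally show "real k * (real k - 1) \<le> (real N)^2" .
  qed (use \<open>0 \<le> A * M + B\<close> in simp)
  also have "\<dots> = A * M + B"
    using \<open>k \<le> N\<close> False by simp
  finally show ?thesis
    by simp
qed (use \<open>0 \<le> A * M + B\<close> in simp)

lemma shoot_endpoint_near_linear:
  fixes h :: "nat \<Rightarrow> real \<Rightarrow> real"
  assumes "0 \<le> A" "A \<le> 2" "0 \<le> B"
    and growth: "\<And>k y. 1 \<le> k \<Longrightarrow> k < N \<Longrightarrow> \<bar>h k y\<bar> \<le> (A * \<bar>y\<bar> + B) / (real N)^2"
  shows "(2 - A) * \<bar>shoot h s N - real N * s\<bar> \<le> A * real N * \<bar>s\<bar> + B"
proof -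
  define M where "M = Max ((\<lambda>k. \<bar>shoot h s k\<bar>) ` {..N})"
  have "\<bar>shoot h s k\<bar> \<le> M" if "k \<le> N" for k
    unfolding M_def using that by (intro Max_ge) auto
  moreover from this[of 0] have "0 \<le> A * M + B"
    using \<open>0 \<le> A\<close> \<open>0 \<le> B\<close> by simp
  ultimately have deviation: "2 * \<bar>shoot h s k - real k * s\<bar> \<le> A * M + B" if "k \<le> N" for k
    using that \<open>0 \<le> A\<close> growth by (intro shoot_deviation_le) auto
  define S where "S = real N * \<bar>s\<bar>"
  have "M \<in> (\<lambda>k. \<bar>shoot h s k\<bar>) ` {..N}"
    unfolding M_def by (intro Max_in) auto
  then obtain k where "k \<le> N" "M = \<bar>shoot h s k\<bar>"
    by auto
  then have "M \<le> \<bar>real k * s\<bar> + \<bar>shoot h s k - real k * s\<bar>"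
    using abs_triangle_ineq[of "real k * s" "shoot h s k - real k * s"] by simp
  moreover have "\<bar>real k * s\<bar> \<le> S"
    using \<open>k \<le> N\<close> by (simp add: S_def abs_mult mult_right_mono)
  ultimately have "2 * M - A * M \<le> 2 * S + B"
    using deviation[OF \<open>k \<le> N\<close>] by argo
  then have "A * (2 * M - A * M) \<le> A * (2 * S + B)"
    using \<open>0 \<le> A\<close> by (rule mult_left_mono)
  then have "(2 - A) * (A * M + B) \<le> 2 * (A * S + B)"
    by (simp add: algebra_simps)
  moreover have "(2 - A) * (2 * \<bar>shoot h s N - real N * s\<bar>) \<le> (2 - A) * (A * M + B)"
    using deviation[of N] \<open>A \<le> 2\<close> by (intro mult_left_mono) auto
  ultimately have "(2 - A) * (2 * \<bar>shoot h s N - real N * s\<bar>) \<le> 2 * (A * S + B)"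
    by (rule order.trans[rotated])
  then show ?thesis
    by (simp add: S_def mult.assoc)
qed

lemma dirichlet_solution_exists:
  fixes h :: "nat \<Rightarrow> real \<Rightarrow> real"
  assumes "N \<ge> 1" "0 \<le> A" "A < 1" "0 \<le> B"
    and cont: "\<And>k. 1 \<le> k \<Longrightarrow> k < N \<Longrightarrow> continuous_on UNIV (h k)"
    and growth: "\<And>k y. 1 \<le> k \<Longrightarrow> k < N \<Longrightarrow> \<bar>h k y\<bar> \<le> (A * \<bar>y\<bar> + B) / (real N)^2"
  shows "\<exists>x. x 0 = 0 \<and> x N = 0 \<and> (\<forall>k. 1 \<le> k \<and> k < N \<longrightarrow> second_diff x k = h k (x k))"
proof -
  define K where "K = B / (1 - A)"
  have "0 \<le> K" "B = (1 - A) * K"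
    using assms(3,4) by (simp_all add: K_def)
  have near: "\<bar>shoot h s N - real N * s\<bar> \<le> real N * K" if "\<bar>s\<bar> = K" for s
  proof -
    have "(2 - A) * \<bar>shoot h s N - real N * s\<bar> \<le> A * real N * K + (1 - A) * K"
      using shoot_endpoint_near_linear[OF assms(2) _ assms(4) growth, where s=s] that
        \<open>B = (1 - A) * K\<close> \<open>A < 1\<close> by simp
    also have "\<dots> \<le> (2 - A) * (real N * K)"
    proof -
      have "0 \<le> (1 - A) * K"
        using \<open>A < 1\<close> \<open>0 \<le> K\<close> by simp
      then have "(1 - A) * K \<le> (1 - A) * K * real N" "0 \<le> (1 - A) * K * real N"
        using \<open>N \<ge> 1\<close> mult_left_mono[of 1 "real N" "(1 - A) * K"] by simp_all
      then show ?thesis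
        by (simp add: algebra_simps)
    qed
    finally show ?thesis
      using \<open>A < 1\<close> by simp
  qed
  have "shoot h (-K) N \<le> 0" "0 \<le> shoot h K N"
    using near[of "-K"] near[of K] \<open>0 \<le> K\<close> by auto
  moreover have "continuous_on {-K..K} (\<lambda>s. shoot h s N)"
    using continuous_on_shoot[of N h] cont by (auto intro: continuous_on_subset)
  ultimately obtain s where "shoot h s N = 0"
    using IVT'[of "\<lambda>s. shoot h s N" "-K" 0 K] \<open>0 \<le> K\<close> by auto
  then show ?thesis
    by (intro exI[of _ "shoot h s"]) (simp add: second_diff_shoot)
qed

lemma dirichlet_solution_unique:
  fixes h :: "nat \<Rightarrow> real \<Rightarrow> real"
  assumes "-1 < m"
    and one_sided: "\<And>k a b. 1 \<le> k \<Longrightarrow> k < N \<Longrightarrow> m / (real N)^2 * (a - b)^2 \<le> (h k a - h k b) * (a - b)"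
    and x: "x 0 = 0" "x N = 0" "\<And>k. 1 \<le> k \<Longrightarrow> k < N \<Longrightarrow> second_diff x k = h k (x k)"
    and y: "y 0 = 0" "y N = 0" "\<And>k. 1 \<le> k \<Longrightarrow> k < N \<Longrightarrow> second_diff y k = h k (y k)"
    and "k \<le> N"
  shows "y k = x k"
proof -
  have "y k - x k = 0"
  proof (rule dirichlet_eq_zero_of_second_diff_ge[where d = "\<lambda>k. y k - x k"])
    fix j assume "1 \<le> j" "j < N"
    then show "m / (real N)^2 * (y j - x j)^2 \<le> (y j - x j) * second_diff (\<lambda>k. y k - x k) j"
      using one_sided[of j "y j" "x j"] x(3) y(3) by (simp add: second_diff_diff mult.commute)
  qed (use assms in auto)
  then show ?thesis
    by simp
qed

definition discrete_rhs :: "nat \<Rightarrow> (real \<Rightarrow> real \<Rightarrow> real) \<Rightarrow> (real \<Rightarrow> real) \<Rightarrow> nat \<Rightarrow> real \<Rightarrow> real" where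
  "discrete_rhs N f v k y = (f (real k / real N) y + v (real k / real N)) / (real N)^2"

lemma discrete_solution_iff:
  "discrete_solution N f v x \<longleftrightarrow>
     x 0 = 0 \<and> x N = 0 \<and> (\<forall>k. 1 \<le> k \<and> k < N \<longrightarrow> second_diff x k = discrete_rhs N f v k (x k))"
  by (auto simp: discrete_solution_def discrete_rhs_def add_divide_distrib)

lemma continuous_on_discrete_rhs:
  "continuous_on UNIV (f (real k / real N)) \<Longrightarrow> continuous_on UNIV (discrete_rhs N f v k)"
  unfolding discrete_rhs_def divide_inverse by (intro continuous_intros)

lemma abs_discrete_rhs_le:
  assumes "\<bar>f (real k / real N) y\<bar> \<le> A * \<bar>y\<bar> + B" "\<bar>v (real k / real N)\<bar> \<le> V"
  shows "\<bar>discrete_rhs N f v k y\<bar> \<le> (A * \<bar>y\<bar> + (B + V)) / (real N)^2"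
proof -
  have "\<bar>f (real k / real N) y + v (real k / real N)\<bar> \<le> A * \<bar>y\<bar> + (B + V)"
    using assms by linarith
  then show ?thesis
    unfolding discrete_rhs_def abs_divide power_abs abs_of_nat by (rule divide_right_mono) simp
qed

lemma discrete_rhs_one_sided:
  assumes "\<And>y. (f (real k / real N) has_real_derivative g' y) (at y)" "\<And>y. m \<le> g' y"
  shows "m / (real N)^2 * (a - b)^2 \<le> (discrete_rhs N f v k a - discrete_rhs N f v k b) * (a - b)"
proof -
  have "m * (a - b)^2 \<le> (f (real k / real N) a - f (real k / real N) b) * (a - b)"
    using assms by (rule diff_mult_diff_ge_of_deriv_ge)
  then have "m * (a - b)^2 / (real N)^2
      \<le> (f (real k / real N) a - f (real k / real N) b) * (a - b) / (real N)^2"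
    by (rule divide_right_mono) simp
  then show ?thesis
    by (simp add: discrete_rhs_def diff_divide_distrib[symmetric])
qed

theorem theorem5:
  fixes N :: nat and v :: "real \<Rightarrow> real" and f :: "real \<Rightarrow> real \<Rightarrow> real"
    and fx :: "real \<Rightarrow> real \<Rightarrow> real" and A B :: real
  assumes N: "N \<ge> 2"
    and v_cont: "continuous_on {0..1} v"
    and f_cont: "continuous_on ({0..1} \<times> UNIV) (\<lambda>(t, x). f t x)"
    and fx_deriv: "\<And>t x. t \<in> {0..1} \<Longrightarrow> (f t has_real_derivative fx t x) (at x)"
    and fx_cont: "continuous_on ({0..1} \<times> UNIV) (\<lambda>(t, x). fx t x)"
    and AB: "0 < A" "A < 1" "0 < B"
    and growth: "\<And>t x. t \<in> {0..1} \<Longrightarrow> \<bar>f t x\<bar> \<le> A * \<bar>x\<bar> + B"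
    and fx_bdd: "bdd_below ((\<lambda>(t, x). fx t x) ` ({0..1} \<times> UNIV))"
    and fx_inf: "(INF (t, x)\<in>{0..1} \<times> UNIV. fx t x) > -1"
  shows "\<exists>x. discrete_solution N f v x \<and>
           (\<forall>y. discrete_solution N f v y \<longrightarrow> (\<forall>k\<le>N. y k = x k))"
proof -
  have t01: "real k / real N \<in> {0..1}" if "k < N" for k
    using that by (auto simp: field_simps)
  obtain V where "\<forall>y\<in>v ` {0..1}. norm y \<le> V"
    using compact_imp_bounded[OF compact_continuous_image[OF v_cont compact_Icc]]
    unfolding bounded_iff by blast
  then have V: "\<And>t. t \<in> {0..1} \<Longrightarrow> \<bar>v t\<bar> \<le> V"
    by simp
  define m where "m = (INF (t, x)\<in>{0..1} \<times> UNIV. fx t x)"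
  have fx_ge: "m \<le> fx t y" if "t \<in> {0..1}" for t y
    using cINF_lower[OF fx_bdd, of "(t, y)"] that by (auto simp: m_def)
  have "continuous_on UNIV (discrete_rhs N f v k)" if "k < N" for k
    using fx_deriv[OF t01[OF that]]
    by (intro continuous_on_discrete_rhs continuous_at_imp_continuous_on) (blast intro: DERIV_isCont)
  moreover have "\<bar>discrete_rhs N f v k y\<bar> \<le> (A * \<bar>y\<bar> + (B + V)) / (real N)^2" if "k < N" for k y
    using growth[OF t01[OF that]] V[OF t01[OF that]] by (rule abs_discrete_rhs_le)
  moreover have "0 \<le> B + V"
    using V[of 0] AB by simp
  ultimately obtain x where x: "discrete_solution N f v x"
    using dirichlet_solution_exists[of N A "B + V" "discrete_rhs N f v"] N AB
    unfolding discrete_solution_iff by auto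
  have one_sided: "m / (real N)^2 * (a - b)^2 \<le> (discrete_rhs N f v k a - discrete_rhs N f v k b) * (a - b)"
    if "k < N" for k a b
    using fx_deriv[OF t01[OF that]] fx_ge[OF t01[OF that]] by (rule discrete_rhs_one_sided)
  have "y k = x k" if "discrete_solution N f v y" "k \<le> N" for y k
    using dirichlet_solution_unique[of m N "discrete_rhs N f v"] fx_inf one_sided x that
    unfolding discrete_solution_iff m_def by auto
  then show ?thesis
    using x by blast
qed

end
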